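(* Let $\delta$ be an $\mathfrak l_m$-dominant integral weight, let $k\ge k'$ be non-negative integers, and let $K\in\kappa(\delta,k)$ and $K'\in\kappa(\delta,k')$ with $K\ne K'$. Then $\chi_{\delta+\lambda_K}=\chi_{\delta+\lambda_{K'}}$ if and only if $\delta$ is resonant, $i:=i(\delta,k)$ is defined, $\tilde\delta_i<k+K_i$, and $K'=K-d\,e_i$ where $d=k+K_i-\tilde\delta_i$.
   Context: $\mathfrak a_m\cong\mathfrak{sl}_{m+1}$ is the projective subalgebra $\mathrm{Span}\{\partial_{x_i},x_j\partial_{x_i},x_j\sum_rx_r\partial_{x_r}\}$ of polynomial vector fields on $\mathbb R^m$, with Cartan subalgebra $\mathfrak h_m=\mathrm{Span}\{x_i\partial_{x_i}\}$. Weights: $\mathfrak h_m^*=\{\lambda=\sum_{i=0}^m\lambda_i\epsilon_i:\sum\lambda_i=0\}$ with $\lambda(x_j\partial_{x_j})=\lambda_j$ ($1\le j\le m$). Let $\rho=\sum_{i=0}^m(\tfrac m2-i)\epsilon_i$; $S_{m+1}$ acts on $\mathfrak h_m^*$ by permuting indices $0,\dots,m$, $w\cdot\lambda=w(\lambda+\rho)-\rho$; $\chi_\lambda$ is the infinitesimal character of $\mathfrak a_m$ associated to $\lambda$ via the Harish-Chandra isomorphism, and $\chi_\lambda=\chi_{\lambda'}$ iff $\lambda'\in S_{m+1}\cdot\lambda$. $\lambda$ is $\mathfrak l_m$-dominant integral if $\lambda_i-\lambda_{i+1}\in\mathbb N$ for $1\le i<m$. $e_i$ is the $i$-th standard basis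 vector of $\mathbb Z^m$. For $K\in\mathbb N^m$: $|K|=\sum K_i$, $\lambda_K=|K|\epsilon_0-\sum_{i=1}^mK_i\epsilon_i$, $\kappa(\delta,k)=\{K\in\mathbb N^m:|K|=k,\ K_i\le\delta_i-\delta_{i+1}\text{ for }i<m\}$. For $\delta=(\delta_0,\dots,\delta_m)$ $\mathfrak l_m$-dominant integral: $i(\delta)\in\{1,\dots,m\}$ is maximal with $\delta_1=\cdots=\delta_{i(\delta)}$; $\tilde\delta_i=\delta_i-i-\delta_0$; $\delta$ is resonant if $\tilde\delta_{i(\delta)}\in\mathbb Z^+$; for $\delta$ resonant, $k\in\mathbb Z^+$ and $\tilde\delta_{i(\delta)}\ge k$, $i(\delta,k)\in\{i(\delta),\dots,m\}$ is maximal with $\tilde\delta_{i(\delta,k)}\ge k$; otherwise $i(\delta,k)$ is undefined. *)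

theory Defs
  imports Complex_Main "HOL-Combinatorics.Permutations"
begin

text \<open>Weights of sl_(m+1) are encoded as functions nat => complex, only the values at
indices 0..m matter. A weight lies in h_m^* iff its coordinates 0..m sum to zero.\<close>

definition is_weight :: "nat \<Rightarrow> (nat \<Rightarrow> complex) \<Rightarrow> bool" where
  "is_weight m lam \<longleftrightarrow> (\<Sum>i=0..m. lam i) = 0"

definition rho :: "nat \<Rightarrow> nat \<Rightarrow> complex" where
  "rho m i = of_nat m / 2 - of_nat i"

text \<open>Equality of infinitesimal characters chi_lambda = chi_mu, via the stated
characterisation: mu lies in the dot-orbit of lambda under S_(m+1), i.e.
mu + rho is a permutation of the coordinates of lambda + rho.\<close>

definition same_infchar :: "nat \<Rightarrow> (nat \<Rightarrow> complex) \<Rightarrow> (nat \<Rightarrow> complex) \<Rightarrow> bool" where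
  "same_infchar m lam \<mu> \<longleftrightarrow>
     (\<exists>p. p permutes {0..m} \<and> (\<forall>i\<le>m. \<mu> i + rho m i = lam (p i) + rho m (p i)))"

definition l_dom_int :: "nat \<Rightarrow> (nat \<Rightarrow> complex) \<Rightarrow> bool" where
  "l_dom_int m lam \<longleftrightarrow> (\<forall>i. 1 \<le> i \<and> i < m \<longrightarrow> (\<exists>n::nat. lam i - lam (Suc i) = of_nat n))"

text \<open>Elements K of N^m are functions nat => nat supported on {1..m}.\<close>

definition abs_K :: "nat \<Rightarrow> (nat \<Rightarrow> nat) \<Rightarrow> nat" where
  "abs_K m K = (\<Sum>i=1..m. K i)"

definition lamK :: "nat \<Rightarrow> (nat \<Rightarrow> nat) \<Rightarrow> nat \<Rightarrow> complex" where
  "lamK m K i = (if i = 0 then of_nat (abs_K m K) else - of_nat (K i))"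

definition kappa :: "nat \<Rightarrow> (nat \<Rightarrow> complex) \<Rightarrow> nat \<Rightarrow> (nat \<Rightarrow> nat) set" where
  "kappa m \<delta> k = {K. (\<forall>i. (i = 0 \<or> m < i) \<longrightarrow> K i = 0) \<and> abs_K m K = k \<and>
      (\<forall>i. 1 \<le> i \<and> i < m \<longrightarrow> (\<exists>n::nat. \<delta> i - \<delta> (Suc i) = of_nat n \<and> K i \<le> n))}"

definition i_delta :: "nat \<Rightarrow> (nat \<Rightarrow> complex) \<Rightarrow> nat" where
  "i_delta m \<delta> = (GREATEST i. 1 \<le> i \<and> i \<le> m \<and> (\<forall>j. 1 \<le> j \<and> j \<le> i \<longrightarrow> \<delta> j = \<delta> 1))"

definition dtilde :: "(nat \<Rightarrow> complex) \<Rightarrow> nat \<Rightarrow> complex" where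
  "dtilde \<delta> i = \<delta> i - of_nat i - \<delta> 0"

definition resonant :: "nat \<Rightarrow> (nat \<Rightarrow> complex) \<Rightarrow> bool" where
  "resonant m \<delta> \<longleftrightarrow> (\<exists>n::nat. 0 < n \<and> dtilde \<delta> (i_delta m \<delta>) = of_nat n)"

definition cge :: "complex \<Rightarrow> nat \<Rightarrow> bool" where
  "cge z k \<longleftrightarrow> Im z = 0 \<and> of_nat k \<le> Re z"

definition idk_defined :: "nat \<Rightarrow> (nat \<Rightarrow> complex) \<Rightarrow> nat \<Rightarrow> bool" where
  "idk_defined m \<delta> k \<longleftrightarrow> resonant m \<delta> \<and> 0 < k \<and> cge (dtilde \<delta> (i_delta m \<delta>)) k"

definition idk :: "nat \<Rightarrow> (nat \<Rightarrow> complex) \<Rightarrow> nat \<Rightarrow> nat" where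
  "idk m \<delta> k = (GREATEST i. i_delta m \<delta> \<le> i \<and> i \<le> m \<and> cge (dtilde \<delta> i) k)"

end

theory Submission
  imports Defs
begin

text \<open>For $j \ge 1$ the $j$-th coordinate of $\delta + \lambda_K + \rho$ is
$\delta_j - K_j - j + m/2$. Dominance of $\delta$ together with $K_l \le \delta_l - \delta_{l+1}$
makes these coordinates drop by a positive integer from $l$ to any $j > l$, even after
subtracting an arbitrary $K'_j$ at $j$; so a permutation relating the coordinates of
$\delta + \lambda_{K'} + \rho$ and $\delta + \lambda_K + \rho$ can only swap index $0$ with
one index $i$. The two resulting equations say $K' = K - d e_i$ and
$\tilde\delta_i = k + K'_i$ with $K'_i < K_i$; the latter forces $\delta_i > \delta_{i+1}$
(hence $i(\delta) \le i$), resonance of $\delta$, and the maximality defining $i(\delta,k)$.\<close>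

lemma permutes_eq_transpose_of_fixes:
  assumes p: "p permutes S" and "a \<in> S"
    and stays: "\<And>x. x \<in> S \<Longrightarrow> x \<noteq> a \<Longrightarrow> p x \<noteq> a \<Longrightarrow> p x = x"
  shows "p = transpose a (p a)"
proof
  have inj: "p x = p y \<longleftrightarrow> x = y" for x y
    using permutes_inj[OF p] by (auto dest: injD)
  have pa: "p a \<in> S" using permutes_in_image[OF p] \<open>a \<in> S\<close> by simp
  have ppa: "p (p a) = a"
    using stays[OF pa] inj by metis
  fix x
  show "p x = transpose a (p a) x"
  proof (cases "x \<in> S")
    case False
    then show ?thesis
      using permutes_not_in[OF p] pa \<open>a \<in> S\<close> by (auto simp: transpose_def)
  next
    case True
    consider "x = a" | "x = p a" | "x \<noteq> a" "x \<noteq> p a" by blast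
    then show ?thesis
    proof cases
      case 3
      then have "p x \<noteq> a" using ppa inj by metis
      then show ?thesis using stays[OF True] 3 by simp
    qed (use ppa in auto)
  qed
qed

lemma l_dom_int_diff_nat:
  assumes "l_dom_int m \<delta>" "1 \<le> l" "l \<le> j" "j \<le> m"
  shows "\<exists>n::nat. \<delta> l - \<delta> j = of_nat n"
  using assms(3,4)
proof (induction j rule: dec_induct)
  case base
  show ?case by (rule exI[of _ 0]) simp
next
  case (step q)
  then obtain a where a: "\<delta> l - \<delta> q = of_nat a" by auto
  from step assms(1,2) obtain b where b: "\<delta> q - \<delta> (Suc q) = of_nat b"
    unfolding l_dom_int_def by fastforce
  have "\<delta> l - \<delta> (Suc q) = of_nat (a + b)" using a b by (simp add: algebra_simps)
  then show ?case by blast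
qed

lemma dtilde_antimono:
  assumes "l_dom_int m \<delta>" "1 \<le> l" "l \<le> j" "j \<le> m"
  shows "\<exists>n::nat. dtilde \<delta> l = dtilde \<delta> j + of_nat n"
proof -
  obtain a where "\<delta> l - \<delta> j = of_nat a" using l_dom_int_diff_nat[OF assms] by blast
  then have "dtilde \<delta> l = dtilde \<delta> j + of_nat (a + (j - l))"
    using \<open>l \<le> j\<close> unfolding dtilde_def by (simp add: of_nat_diff algebra_simps)
  then show ?thesis by blast
qed

lemma kappa_le_diff:
  "K \<in> kappa m \<delta> k \<Longrightarrow> 1 \<le> i \<Longrightarrow> i < m \<Longrightarrow>
    \<exists>n::nat. \<delta> i - \<delta> (Suc i) = of_nat n \<and> K i \<le> n"
  by (simp add: kappa_def)

lemma kappa_gap: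
  assumes "l_dom_int m \<delta>" "K \<in> kappa m \<delta> k" "1 \<le> l" "l < j" "j \<le> m"
  shows "\<exists>n::nat. \<delta> l - of_nat (K l) - of_nat l = \<delta> j - of_nat j + of_nat (Suc n)"
proof -
  have "l < m" using assms(4,5) by simp
  then obtain a where a: "\<delta> l - \<delta> (Suc l) = of_nat a" "K l \<le> a"
    using kappa_le_diff[OF assms(2,3)] by blast
  obtain b where b: "\<delta> (Suc l) - \<delta> j = of_nat b"
    using l_dom_int_diff_nat[OF assms(1), of "Suc l" j] assms(4,5) by auto
  have "\<delta> l - of_nat (K l) - of_nat l
      = \<delta> j - of_nat j + (\<delta> l - \<delta> (Suc l) - of_nat (K l)) + (\<delta> (Suc l) - \<delta> j)
        + (of_nat j - of_nat l)"
    by (simp add: algebra_simps)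
  also have "\<dots> = \<delta> j - of_nat j + of_nat (Suc (a - K l + b + (j - Suc l)))"
    using a b assms(4) by (simp add: of_nat_diff)
  finally show ?thesis by blast
qed

lemma kappa_coord_eq_imp_eq:
  assumes "l_dom_int m \<delta>" "K \<in> kappa m \<delta> k" "K' \<in> kappa m \<delta> k'"
    and "1 \<le> j" "j \<le> m" "1 \<le> l" "l \<le> m"
    and eq: "\<delta> j - of_nat (K' j) - of_nat j = \<delta> l - of_nat (K l) - of_nat l"
  shows "j = l"
proof (rule ccontr)
  assume "j \<noteq> l"
  have no_gap: "\<delta> x - of_nat c - of_nat x \<noteq> \<delta> x - of_nat x + of_nat (Suc n)"
    for x c n :: nat
  proof
    assume "\<delta> x - of_nat c - of_nat x = \<delta> x - of_nat x + of_nat (Suc n)"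
    then have "of_nat (c + Suc n) = (0 :: complex)" by (simp add: algebra_simps)
    then show False by (simp only: of_nat_eq_0_iff)
  qed
  consider "l < j" | "j < l" using \<open>j \<noteq> l\<close> by linarith
  then show False
  proof cases
    case 1
    then show False using kappa_gap[OF assms(1,2,6) 1 assms(5)] eq no_gap by metis
  next
    case 2
    then show False using kappa_gap[OF assms(1,3,4) 2 assms(7)] eq no_gap by metis
  qed
qed

lemma kappa_eq_zero: "K \<in> kappa m \<delta> k \<Longrightarrow> j = 0 \<or> m < j \<Longrightarrow> K j = 0"
  by (auto simp add: kappa_def)

lemma kappa_abs_K: "K \<in> kappa m \<delta> k \<Longrightarrow> abs_K m K = k"
  by (simp add: kappa_def)

lemma abs_K_agree_off:
  assumes "1 \<le> i" "i \<le> m" "\<And>j. j \<noteq> i \<Longrightarrow> K' j = K j"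
  shows "abs_K m K + K' i = abs_K m K' + K i"
proof -
  have i: "i \<in> {1..m}" using assms(1,2) by simp
  have "abs_K m K = K i + (\<Sum>j\<in>{1..m} - {i}. K j)"
    unfolding abs_K_def using sum.remove[OF _ i] by simp
  moreover have "abs_K m K' = K' i + (\<Sum>j\<in>{1..m} - {i}. K j)"
    unfolding abs_K_def using sum.remove[OF _ i, of K'] assms(3) by simp
  ultimately show ?thesis by simp
qed

lemma infchar_coord:
  "\<delta> j + lamK m K j + rho m j =
    (if j = 0 then \<delta> 0 + of_nat (abs_K m K) else \<delta> j - of_nat (K j) - of_nat j) + of_nat m / 2"
  by (simp add: lamK_def rho_def)

text \<open>Given $|K| = k$, the transposition $(0\ i)$ carries the coordinates of
$\delta + \lambda_K + \rho$ to those of $\delta + \lambda_{K'} + \rho$ exactly when this holds.\<close>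

definition transposes_at ::
    "nat \<Rightarrow> (nat \<Rightarrow> complex) \<Rightarrow> nat \<Rightarrow> (nat \<Rightarrow> nat) \<Rightarrow> (nat \<Rightarrow> nat) \<Rightarrow> nat \<Rightarrow> bool" where
  "transposes_at m \<delta> k K K' i \<longleftrightarrow> 1 \<le> i \<and> i \<le> m \<and> (\<forall>j. j \<noteq> i \<longrightarrow> K' j = K j) \<and>
     dtilde \<delta> i = of_nat k + of_nat (K' i)"

lemma same_infchar_imp_transposes_at:
  assumes dom: "l_dom_int m \<delta>" and K: "K \<in> kappa m \<delta> k" and K': "K' \<in> kappa m \<delta> k'"
    and "K \<noteq> K'"
    and "same_infchar m (\<lambda>j. \<delta> j + lamK m K j) (\<lambda>j. \<delta> j + lamK m K' j)"
  shows "\<exists>i. transposes_at m \<delta> k K K' i"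
proof -
  obtain p where p: "p permutes {0..m}"
    and eq: "\<And>j. j \<le> m \<Longrightarrow> \<delta> j + lamK m K' j + rho m j = \<delta> (p j) + lamK m K (p j) + rho m (p j)"
    using assms(5) unfolding same_infchar_def by auto
  have p_le: "p j \<le> m" if "j \<le> m" for j
    using permutes_in_image[OF p] that by simp
  have "p j = j" if "j \<in> {0..m}" "j \<noteq> 0" "p j \<noteq> 0" for j
    using kappa_coord_eq_imp_eq[OF dom K' K] eq[of j] p_le[of j] that
    by (simp add: infchar_coord)
  then have "p = transpose 0 (p 0)"
    by (intro permutes_eq_transpose_of_fixes[OF p]) auto
  moreover define i where "i = p 0"
  ultimately have p_eq: "p = transpose 0 i" by simp
  have K'_eq: "K' j = K j" if "j \<noteq> i" for j
  proof (cases "1 \<le> j \<and> j \<le> m")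
    case True
    have "p j = j" unfolding p_eq using that True by simp
    then show ?thesis using eq[of j] True by (simp add: infchar_coord)
  next
    case False
    then have "j = 0 \<or> m < j" by auto
    then show ?thesis using kappa_eq_zero[OF K] kappa_eq_zero[OF K'] by metis
  qed
  have "i \<noteq> 0"
  proof
    assume "i = 0"
    then have "K' j = K j" for j
      using K'_eq[of j] kappa_eq_zero[OF K, of 0] kappa_eq_zero[OF K', of 0] by (cases "j = 0") auto
    then show False using \<open>K \<noteq> K'\<close> by auto
  qed
  moreover have "i \<le> m" using p_le[of 0] unfolding i_def by simp
  moreover have "p i = 0" unfolding p_eq by simp
  ultimately have "\<delta> i - of_nat (K' i) - of_nat i = \<delta> 0 + of_nat k"
    using eq[of i] kappa_abs_K[OF K] by (simp add: infchar_coord)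
  then have "dtilde \<delta> i = of_nat k + of_nat (K' i)"
    by (simp add: dtilde_def algebra_simps)
  with \<open>i \<noteq> 0\<close> \<open>i \<le> m\<close> K'_eq show ?thesis
    unfolding transposes_at_def by (intro exI[of _ i]) simp
qed

lemma transposes_at_imp_same_infchar:
  assumes K: "K \<in> kappa m \<delta> k" and K': "K' \<in> kappa m \<delta> k'"
    and "transposes_at m \<delta> k K K' i"
  shows "same_infchar m (\<lambda>j. \<delta> j + lamK m K j) (\<lambda>j. \<delta> j + lamK m K' j)"
proof -
  from assms(3) have i: "1 \<le> i" "i \<le> m" and K'_eq: "\<And>j. j \<noteq> i \<Longrightarrow> K' j = K j"
    and dt: "dtilde \<delta> i = of_nat k + of_nat (K' i)"
    unfolding transposes_at_def by auto
  have "abs_K m K + K' i = abs_K m K' + K i"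
    by (rule abs_K_agree_off[OF i]) (rule K'_eq)
  then have "k + K' i = k' + K i"
    using kappa_abs_K[OF K] kappa_abs_K[OF K'] by simp
  then have dt': "dtilde \<delta> i = of_nat k' + of_nat (K i)"
    using dt by (metis of_nat_add)
  have coord_0: "\<delta> i - of_nat (K i) - of_nat i = \<delta> 0 + of_nat (abs_K m K')"
    using dt' kappa_abs_K[OF K'] by (simp add: dtilde_def algebra_simps)
  have coord_i: "\<delta> i - of_nat (K' i) - of_nat i = \<delta> 0 + of_nat (abs_K m K)"
    using dt kappa_abs_K[OF K] by (simp add: dtilde_def algebra_simps)
  show ?thesis
    unfolding same_infchar_def
  proof (intro exI conjI allI impI)
    show "transpose 0 i permutes {0..m}" using i by (intro permutes_swap_id) auto
  next
    fix j assume "j \<le> m"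
    consider "j = 0" | "j = i" | "j \<noteq> 0" "j \<noteq> i" by blast
    then show "\<delta> j + lamK m K' j + rho m j =
      \<delta> (transpose 0 i j) + lamK m K (transpose 0 i j) + rho m (transpose 0 i j)"
      unfolding infchar_coord using i coord_0 coord_i K'_eq by cases auto
  qed
qed

lemma i_delta_spec:
  assumes "1 \<le> m"
  shows "1 \<le> i_delta m \<delta> \<and> i_delta m \<delta> \<le> m \<and>
    (\<forall>j. 1 \<le> j \<and> j \<le> i_delta m \<delta> \<longrightarrow> \<delta> j = \<delta> 1)"
proof -
  let ?P = "\<lambda>i. 1 \<le> i \<and> i \<le> m \<and> (\<forall>j. 1 \<le> j \<and> j \<le> i \<longrightarrow> \<delta> j = \<delta> 1)"
  have "?P 1" using assms by auto
  then have "?P (Greatest ?P)" by (rule GreatestI_nat[where b = m]) auto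
  then show ?thesis unfolding i_delta_def .
qed

lemma i_delta_le_of_kappa_pos:
  assumes K: "K \<in> kappa m \<delta> k" and i: "1 \<le> i" "i \<le> m" and "0 < K i"
  shows "i_delta m \<delta> \<le> i"
proof (rule ccontr)
  assume "\<not> i_delta m \<delta> \<le> i"
  then have lt: "i < i_delta m \<delta>" by simp
  have "1 \<le> m" using i by simp
  then have spec: "i_delta m \<delta> \<le> m" "\<And>j. 1 \<le> j \<Longrightarrow> j \<le> i_delta m \<delta> \<Longrightarrow> \<delta> j = \<delta> 1"
    using i_delta_spec by blast+
  have "i < m" using lt spec(1) by simp
  have "\<delta> i = \<delta> (Suc i)"
    using spec(2)[of i] spec(2)[of "Suc i"] i lt by simp
  moreover obtain n where "\<delta> i - \<delta> (Suc i) = of_nat n" "K i \<le> n"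
    using kappa_le_diff[OF K i(1) \<open>i < m\<close>] by blast
  ultimately show False using \<open>0 < K i\<close> by simp
qed

lemma idk_bounds:
  assumes "1 \<le> m" "idk_defined m \<delta> k"
  shows "i_delta m \<delta> \<le> idk m \<delta> k" "idk m \<delta> k \<le> m"
proof -
  let ?P = "\<lambda>i. i_delta m \<delta> \<le> i \<and> i \<le> m \<and> cge (dtilde \<delta> i) k"
  have "cge (dtilde \<delta> (i_delta m \<delta>)) k"
    using assms(2) by (simp add: idk_defined_def)
  moreover have "i_delta m \<delta> \<le> m"
    using i_delta_spec[OF assms(1)] by blast
  ultimately have "?P (i_delta m \<delta>)" by simp
  then have "?P (Greatest ?P)" by (rule GreatestI_nat) (rule conjunct1[OF conjunct2])
  then show "i_delta m \<delta> \<le> idk m \<delta> k" "idk m \<delta> k \<le> m"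
    unfolding idk_def by simp_all
qed

lemma idk_eqI:
  assumes dom: "l_dom_int m \<delta>" and K: "K \<in> kappa m \<delta> k'"
    and i: "1 \<le> i" "i_delta m \<delta> \<le> i" "i \<le> m"
    and dt: "dtilde \<delta> i = of_nat k + of_nat n" and "n < K i"
  shows "idk m \<delta> k = i"
  unfolding idk_def
proof (rule Greatest_equality)
  show "i_delta m \<delta> \<le> i \<and> i \<le> m \<and> cge (dtilde \<delta> i) k"
    using i dt by (simp add: cge_def)
next
  fix y assume y: "i_delta m \<delta> \<le> y \<and> y \<le> m \<and> cge (dtilde \<delta> y) k"
  show "y \<le> i"
  proof (rule ccontr)
    assume "\<not> y \<le> i"
    then obtain c where "\<delta> i - of_nat (K i) - of_nat i = \<delta> y - of_nat y + of_nat (Suc c)"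
      using kappa_gap[OF dom K i(1)] y by (metis not_le)
    then have "dtilde \<delta> y + of_nat (K i + Suc c) = of_nat (k + n)"
      using dt unfolding dtilde_def by (simp add: algebra_simps)
    then have "dtilde \<delta> y = of_nat (k + n) - of_nat (K i + Suc c)"
      by (simp add: eq_diff_eq)
    then have "Re (dtilde \<delta> y) = real (k + n) - real (K i + Suc c)" by simp
    then show False using y \<open>n < K i\<close> unfolding cge_def by simp
  qed
qed

lemma transposes_at_imp_idk:
  assumes "1 \<le> m" and dom: "l_dom_int m \<delta>" and "k' \<le> k"
    and K: "K \<in> kappa m \<delta> k" and K': "K' \<in> kappa m \<delta> k'" and "K \<noteq> K'"
    and "transposes_at m \<delta> k K K' i"
  shows "resonant m \<delta>" "idk_defined m \<delta> k" "idk m \<delta> k = i" "K' i < K i"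
proof -
  from assms(7) have i: "1 \<le> i" "i \<le> m" and K'_eq: "\<And>j. j \<noteq> i \<Longrightarrow> K' j = K j"
    and dt: "dtilde \<delta> i = of_nat k + of_nat (K' i)"
    unfolding transposes_at_def by auto
  have "abs_K m K + K' i = abs_K m K' + K i"
    by (rule abs_K_agree_off[OF i]) (rule K'_eq)
  then have sum: "k + K' i = k' + K i"
    using kappa_abs_K[OF K] kappa_abs_K[OF K'] by simp
  have "K' i \<noteq> K i"
  proof
    assume "K' i = K i"
    then have "K' = K" using K'_eq by (intro ext) metis
    then show False using \<open>K \<noteq> K'\<close> by simp
  qed
  then show lt: "K' i < K i" using sum \<open>k' \<le> k\<close> by simp
  have "0 < k" using lt sum \<open>k' \<le> k\<close> by simp
  have le_i: "i_delta m \<delta> \<le> i"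
    using i_delta_le_of_kappa_pos[OF K i] lt by simp
  moreover have "1 \<le> i_delta m \<delta>" using i_delta_spec[OF assms(1)] by blast
  ultimately obtain n where "dtilde \<delta> (i_delta m \<delta>) = dtilde \<delta> i + of_nat n"
    using dtilde_antimono[OF dom _ _ i(2)] by blast
  then have dt_i_delta: "dtilde \<delta> (i_delta m \<delta>) = of_nat (k + K' i + n)"
    using dt by simp
  show res: "resonant m \<delta>"
    unfolding resonant_def using dt_i_delta \<open>0 < k\<close> by (intro exI[of _ "k + K' i + n"]) simp
  show "idk_defined m \<delta> k"
    unfolding idk_defined_def cge_def using res dt_i_delta \<open>0 < k\<close> by simp
  show "idk m \<delta> k = i"
    by (rule idk_eqI[OF dom K i(1) le_i i(2) dt lt])
qed

theorem mainTheorem11: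
  fixes m k k' :: nat and \<delta> :: "nat \<Rightarrow> complex" and K K' :: "nat \<Rightarrow> nat"
  assumes "1 \<le> m"
    and "is_weight m \<delta>"
    and "l_dom_int m \<delta>"
    and "k' \<le> k"
    and "K \<in> kappa m \<delta> k"
    and "K' \<in> kappa m \<delta> k'"
    and "K \<noteq> K'"
  shows "same_infchar m (\<lambda>j. \<delta> j + lamK m K j) (\<lambda>j. \<delta> j + lamK m K' j) \<longleftrightarrow>
    (resonant m \<delta> \<and> idk_defined m \<delta> k \<and>
     (let i = idk m \<delta> k; d = of_nat k + of_nat (K i) - dtilde \<delta> i in
        Im (dtilde \<delta> i) = 0 \<and> Re (dtilde \<delta> i) < of_nat k + of_nat (K i) \<and>
        (\<forall>j. j \<noteq> i \<longrightarrow> K' j = K j) \<and> of_nat (K' i) = of_nat (K i) - d))"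
proof
  assume "same_infchar m (\<lambda>j. \<delta> j + lamK m K j) (\<lambda>j. \<delta> j + lamK m K' j)"
  then obtain i where i: "transposes_at m \<delta> k K K' i"
    using same_infchar_imp_transposes_at[OF assms(3,5,6,7)] by blast
  show "resonant m \<delta> \<and> idk_defined m \<delta> k \<and>
     (let i = idk m \<delta> k; d = of_nat k + of_nat (K i) - dtilde \<delta> i in
        Im (dtilde \<delta> i) = 0 \<and> Re (dtilde \<delta> i) < of_nat k + of_nat (K i) \<and>
        (\<forall>j. j \<noteq> i \<longrightarrow> K' j = K j) \<and> of_nat (K' i) = of_nat (K i) - d)"
    using i transposes_at_imp_idk[OF assms(1,3,4,5,6,7) i]
    by (simp add: transposes_at_def Let_def)
next
  assume rhs: "resonant m \<delta> \<and> idk_defined m \<delta> k \<and>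
     (let i = idk m \<delta> k; d = of_nat k + of_nat (K i) - dtilde \<delta> i in
        Im (dtilde \<delta> i) = 0 \<and> Re (dtilde \<delta> i) < of_nat k + of_nat (K i) \<and>
        (\<forall>j. j \<noteq> i \<longrightarrow> K' j = K j) \<and> of_nat (K' i) = of_nat (K i) - d)"
  moreover have "1 \<le> i_delta m \<delta>" using i_delta_spec[OF assms(1)] by blast
  moreover have "i_delta m \<delta> \<le> idk m \<delta> k" "idk m \<delta> k \<le> m"
    using idk_bounds[OF assms(1)] rhs by auto
  ultimately have "transposes_at m \<delta> k K K' (idk m \<delta> k)"
    by (auto simp: transposes_at_def Let_def algebra_simps)
  then show "same_infchar m (\<lambda>j. \<delta> j + lamK m K j) (\<lambda>j. \<delta> j + lamK m K' j)"
    by (rule transposes_at_imp_same_infchar[OF assms(5,6)])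
qed

end
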